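(* Under the assumptions in the context, the operator $K$ defined by $K(t,f)=\bigl(\tfrac12\sum_{j=1}^{n-1}k_{n-j,j}(t)f_{n-j}f_j-\sum_{j=1}^\infty k_{n,j}(t)f_nf_j\bigr)_{n=1}^\infty$, $t\in[0,T)$, $f\in\ell^1_{\widetilde w}$, is a continuous mapping from $[0,T)\times\ell^1_{\widetilde w}$ to $\ell^1_w$. Moreover, $K$ is Lipschitz in the second argument on bounded sets, uniformly in the first argument on compact intervals: for every $t'\in[0,T)$ and $r>0$ there is $L$ with $\|K(t,f)-K(t,g)\|_w\le L\|f-g\|_{\widetilde w}$ for all $f,g$ with $\|f\|_{\widetilde w},\|g\|_{\widetilde w}\le r$ and $t\in[0,t']$.
   Context: Let $0<T\le\infty$, $a_n\ge0$, $b_{n,j}\ge0$ with $b_{n,j}=0$ for $j\le n$, $k_{n,j}:[0,T)\to[0,\infty)$ with $k_{n,j}(t)=k_{j,n}(t)$. For a positive sequence $v$, $\ell^1_v=\{f=(f_n)\subset\mathbb R:\|f\|_v=\sum v_n|f_n|<\infty\}$. The weight $w$ satisfies $w_n\ge n$, $(w_n)$ monotone increasing, and $\sum_{n=1}^{j-1}w_nb_{n,j}\le\kappa w_j$ for all $j\ge2$ with some $\kappa\in(0,1]$. Also $\alpha\in[0,1)$ with either (CI) $\alpha=0$, or (CII) $\kappa<1$ and $\alpha\in(0,1)$; $\widetilde w_n=(1+a_n)^\alpha w_n$. Each $k_{n,j}$ is continuous on $[0,T)$, and for every $t'\in(0,T)$ there is $c(t')>0$ with $k_{n,j}(t)\le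 c(t')\widetilde w_n\widetilde w_j/w_{n+j}$ for all $n,j$ and $t\in[0,t']$. *)

theory Defs
  imports "HOL-Analysis.Analysis"
begin

text \<open>Sequences f = (f_n)_{n \<ge> 1} are represented as functions nat \<Rightarrow> real
  with the unused entry f 0 fixed to 0.\<close>

definition ell1 :: "(nat \<Rightarrow> real) \<Rightarrow> (nat \<Rightarrow> real) set" where
  "ell1 v = {f. f 0 = 0 \<and> summable (\<lambda>n. v n * \<bar>f n\<bar>)}"

definition wnorm :: "(nat \<Rightarrow> real) \<Rightarrow> (nat \<Rightarrow> real) \<Rightarrow> real" where
  "wnorm v f = (\<Sum>n. v n * \<bar>f n\<bar>)"

definition Kop :: "(nat \<Rightarrow> nat \<Rightarrow> real \<Rightarrow> real) \<Rightarrow> real \<Rightarrow> (nat \<Rightarrow> real) \<Rightarrow> nat \<Rightarrow> real" where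
  "Kop k t f n = (if n = 0 then 0 else
     (1/2) * (\<Sum>j=1..n-1. k (n-j) j t * f (n-j) * f j)
     - (\<Sum>j. k n (Suc j) t * f n * f (Suc j)))"

end

theory Submission
  imports Defs "HOL-Library.Function_Algebras"
begin

(* Kop k t is the diagonal of the bilinear form coag q f g with kernel q = k(t).  If
   |q n j| <= C wt n wt j / w (n + j), then, w being increasing, w n |coag q f g n| is dominated
   termwise by C times a summable majorant (a Cauchy product for the gain sum, wt n |f n| |g|_wt
   for the loss sum), whence |coag q f g|_w <= 3/2 C |f|_wt |g|_wt.  Bilinearity,
   coag q f f - coag q g g = coag q (f - g) f + coag q g (f - g), gives the Lipschitz bound on
   balls.  For continuity in t, the kernels k(s) - k(t) tend to 0 entrywise and stay bounded by
   2C near t, so the same majorant and dominated convergence (Tannery's theorem) make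
   coag (k(s) - k(t)) f f tend to 0 in l^1_w. *)

lemma tendsto_suminf_dominated:
  fixes a :: "nat \<Rightarrow> 'b \<Rightarrow> real"
  assumes lim: "\<And>k. ((\<lambda>x. a k x) \<longlongrightarrow> b k) F"
    and bound: "eventually (\<lambda>x. \<forall>k. \<bar>a k x\<bar> \<le> M k) F" and M: "summable M"
  shows "((\<lambda>x. \<Sum>k. a k x) \<longlongrightarrow> (\<Sum>k. b k)) F"
proof (cases "F = bot")
  case False
  have prod_bound: "eventually (\<lambda>(k, x). norm (a k x) \<le> M k) (at_top \<times>\<^sub>F F)"
    using bound unfolding eventually_prod_filter
    by (intro exI[of _ "\<lambda>_. True"] exI[of _ "\<lambda>x. \<forall>k. \<bar>a k x\<bar> \<le> M k"]) auto
  show ?thesis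
    using tannerys_theorem[of a b F M, OF lim prod_bound M False] by blast
qed simp

definition coag :: "(nat \<Rightarrow> nat \<Rightarrow> real) \<Rightarrow> (nat \<Rightarrow> real) \<Rightarrow> (nat \<Rightarrow> real) \<Rightarrow> nat \<Rightarrow> real" where
  "coag q f g n = (if n = 0 then 0 else
     1/2 * (\<Sum>j=1..n-1. q (n-j) j * f (n-j) * g j) - (\<Sum>j. q n (Suc j) * f n * g (Suc j)))"

lemma Kop_eq_coag: "Kop k t f = coag (\<lambda>n j. k n j t) f f"
  by (rule ext) (simp add: Kop_def coag_def)

lemma coag_zero_kernel [simp]: "coag 0 f g = 0"
  by (rule ext) (simp add: coag_def)

lemma coag_eq_diff:
  assumes terms: "\<And>n j. r n j * h n * h' j = p n j * f n * f' j - q n j * g n * g' j"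
    and summable_p: "\<And>n. 1 \<le> n \<Longrightarrow> summable (\<lambda>j. p n (Suc j) * f n * f' (Suc j))"
    and summable_q: "\<And>n. 1 \<le> n \<Longrightarrow> summable (\<lambda>j. q n (Suc j) * g n * g' (Suc j))"
  shows "coag r h h' = coag p f f' - coag q g g'"
proof
  fix n :: nat
  show "coag r h h' n = (coag p f f' - coag q g g') n"
  proof (cases "n = 0")
    case False
    have "(\<Sum>j=1..n-1. r (n-j) j * h (n-j) * h' j) =
        (\<Sum>j=1..n-1. p (n-j) j * f (n-j) * f' j) - (\<Sum>j=1..n-1. q (n-j) j * g (n-j) * g' j)"
      by (simp add: terms sum_subtractf)
    moreover have "(\<Sum>j. r n (Suc j) * h n * h' (Suc j)) =
        (\<Sum>j. p n (Suc j) * f n * f' (Suc j)) - (\<Sum>j. q n (Suc j) * g n * g' (Suc j))"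
      using False by (simp add: terms suminf_diff summable_p summable_q)
    ultimately show ?thesis
      using False by (simp add: coag_def algebra_simps)
  qed (simp add: coag_def)
qed

lemma ell1_term_nonneg:
  assumes "\<And>n. 1 \<le> n \<Longrightarrow> 0 \<le> v n" and "f \<in> ell1 v"
  shows "0 \<le> v n * \<bar>f n\<bar>"
  using assms by (cases "n = 0") (auto simp: ell1_def)

lemma wnorm_nonneg:
  assumes "\<And>n. 1 \<le> n \<Longrightarrow> 0 \<le> v n" and "f \<in> ell1 v"
  shows "0 \<le> wnorm v f"
  unfolding wnorm_def using assms
  by (intro suminf_nonneg ell1_term_nonneg) (auto simp: ell1_def)

lemma wnorm_zero [simp]: "wnorm v 0 = 0"
  by (simp add: wnorm_def)

lemma ell1_uminus: "f \<in> ell1 v \<Longrightarrow> - f \<in> ell1 v"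
  by (simp add: ell1_def)

lemma
  assumes v: "\<And>n. 1 \<le> n \<Longrightarrow> 0 \<le> v n" and f: "f \<in> ell1 v" and g: "g \<in> ell1 v"
  shows ell1_add: "f + g \<in> ell1 v"
    and wnorm_add_le: "wnorm v (f + g) \<le> wnorm v f + wnorm v g"
proof -
  have le: "v n * \<bar>(f + g) n\<bar> \<le> v n * \<bar>f n\<bar> + v n * \<bar>g n\<bar>" for n
    using v[of n] f g by (cases "n = 0") (auto simp: ell1_def abs_triangle_ineq
        simp flip: distrib_left intro: mult_left_mono)
  have sf: "summable (\<lambda>n. v n * \<bar>f n\<bar>)" and sg: "summable (\<lambda>n. v n * \<bar>g n\<bar>)"
    using f g by (simp_all add: ell1_def)
  have nonneg: "0 \<le> v n * \<bar>(f + g) n\<bar>" for n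
    using v[of n] f g by (cases "n = 0") (auto simp: ell1_def)
  have s: "summable (\<lambda>n. v n * \<bar>(f + g) n\<bar>)"
    using le nonneg by (intro summable_comparison_test'[OF summable_add[OF sf sg]]) auto
  then show "f + g \<in> ell1 v"
    using f g by (simp add: ell1_def)
  have "wnorm v (f + g) \<le> (\<Sum>n. v n * \<bar>f n\<bar> + v n * \<bar>g n\<bar>)"
    unfolding wnorm_def by (intro suminf_le le s summable_add sf sg)
  also have "\<dots> = wnorm v f + wnorm v g"
    unfolding wnorm_def by (rule suminf_add[OF sf sg, symmetric])
  finally show "wnorm v (f + g) \<le> wnorm v f + wnorm v g" .
qed

lemma ell1_diff:
  assumes "\<And>n. 1 \<le> n \<Longrightarrow> 0 \<le> v n" and "f \<in> ell1 v" and "g \<in> ell1 v"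
  shows "f - g \<in> ell1 v"
  using ell1_add[OF assms(1,2) ell1_uminus[OF assms(3)]] by simp

locale coag_weights =
  fixes w wt :: "nat \<Rightarrow> real"
  assumes w_pos: "\<And>n. 1 \<le> n \<Longrightarrow> 0 < w n"
    and w_mono: "\<And>m n. 1 \<le> m \<Longrightarrow> m \<le> n \<Longrightarrow> w m \<le> w n"
    and wt_pos: "\<And>n. 1 \<le> n \<Longrightarrow> 0 < wt n"
begin

lemma w_nonneg: "1 \<le> n \<Longrightarrow> 0 \<le> w n"
  using w_pos less_imp_le by blast

lemma wt_nonneg: "1 \<le> n \<Longrightarrow> 0 \<le> wt n"
  using wt_pos less_imp_le by blast

definition kernel_bounded :: "real \<Rightarrow> (nat \<Rightarrow> nat \<Rightarrow> real) \<Rightarrow> bool" where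
  "kernel_bounded C q \<longleftrightarrow> (\<forall>n j. 1 \<le> n \<longrightarrow> 1 \<le> j \<longrightarrow> \<bar>q n j\<bar> \<le> C * wt n * wt j / w (n + j))"

lemma kernel_boundedD:
  "kernel_bounded C q \<Longrightarrow> 1 \<le> n \<Longrightarrow> 1 \<le> j \<Longrightarrow> \<bar>q n j\<bar> \<le> C * wt n * wt j / w (n + j)"
  by (simp add: kernel_bounded_def)

lemma kernel_bounded_nonneg:
  assumes "kernel_bounded C q"
  shows "0 \<le> C"
proof -
  have "0 \<le> C * wt 1 * wt 1 / w (1 + 1)"
    by (rule order_trans[OF abs_ge_zero kernel_boundedD[OF assms]]) auto
  then show ?thesis
    using wt_pos[of 1] w_pos[of "1 + 1"] by (simp add: zero_le_divide_iff zero_le_mult_iff)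
qed

lemma kernel_bounded_diff:
  assumes "kernel_bounded C p" and "kernel_bounded D q"
  shows "kernel_bounded (C + D) (p - q)"
  unfolding kernel_bounded_def
proof (intro allI impI)
  fix n j :: nat
  assume "1 \<le> n" "1 \<le> j"
  have "\<bar>p n j - q n j\<bar> \<le> \<bar>p n j\<bar> + \<bar>q n j\<bar>"
    by (rule abs_triangle_ineq4)
  also have "\<dots> \<le> C * wt n * wt j / w (n + j) + D * wt n * wt j / w (n + j)"
    using assms \<open>1 \<le> n\<close> \<open>1 \<le> j\<close> by (intro add_mono) (simp_all add: kernel_boundedD)
  finally show "\<bar>(p - q) n j\<bar> \<le> (C + D) * wt n * wt j / w (n + j)"
    by (simp add: add_divide_distrib distrib_right)
qed

lemma kernel_bounded_term:
  assumes q: "kernel_bounded C q" and "1 \<le> n" "1 \<le> j" "1 \<le> m" "m \<le> n + j"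
  shows "w m * \<bar>q n j * f n * g j\<bar> \<le> C * (wt n * \<bar>f n\<bar>) * (wt j * \<bar>g j\<bar>)"
proof -
  have w: "0 < w m" "0 < w (n + j)" "w m \<le> w (n + j)"
    using assms w_pos w_mono by auto
  have "w m * \<bar>q n j\<bar> \<le> w (n + j) * \<bar>q n j\<bar>"
    using w by (intro mult_right_mono) auto
  also have "\<dots> \<le> C * wt n * wt j"
    using kernel_boundedD[OF q \<open>1 \<le> n\<close> \<open>1 \<le> j\<close>] w by (simp add: field_simps)
  finally have "w m * \<bar>q n j\<bar> * (\<bar>f n\<bar> * \<bar>g j\<bar>) \<le> C * wt n * wt j * (\<bar>f n\<bar> * \<bar>g j\<bar>)"
    by (intro mult_right_mono) auto
  then show ?thesis
    by (simp add: abs_mult ac_simps)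
qed

lemma coag_loss_abs_summable:
  assumes q: "kernel_bounded C q" and g: "g \<in> ell1 wt" and n: "1 \<le> n"
  shows "summable (\<lambda>j. \<bar>q n (Suc j) * f n * g (Suc j)\<bar>)"
proof (rule summable_comparison_test')
  have "summable (\<lambda>j. wt (Suc j) * \<bar>g (Suc j)\<bar>)"
    using g summable_Suc_iff[of "\<lambda>n. wt n * \<bar>g n\<bar>"] by (simp add: ell1_def)
  then show "summable (\<lambda>j. C * (wt n * \<bar>f n\<bar>) * (wt (Suc j) * \<bar>g (Suc j)\<bar>) / w n)"
    by (intro summable_divide summable_mult)
  show "norm \<bar>q n (Suc j) * f n * g (Suc j)\<bar> \<le> C * (wt n * \<bar>f n\<bar>) * (wt (Suc j) * \<bar>g (Suc j)\<bar>) / w n"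
    for j
  proof -
    have "w n * \<bar>q n (Suc j) * f n * g (Suc j)\<bar> \<le> C * (wt n * \<bar>f n\<bar>) * (wt (Suc j) * \<bar>g (Suc j)\<bar>)"
      using n by (intro kernel_bounded_term[OF q]) auto
    then show ?thesis
      using w_pos[OF n] by (simp add: pos_le_divide_eq mult.commute)
  qed
qed

definition coag_majorant :: "(nat \<Rightarrow> real) \<Rightarrow> (nat \<Rightarrow> real) \<Rightarrow> nat \<Rightarrow> real" where
  "coag_majorant f g n =
     1/2 * (\<Sum>i\<le>n. wt i * \<bar>g i\<bar> * (wt (n - i) * \<bar>f (n - i)\<bar>)) + wt n * \<bar>f n\<bar> * wnorm wt g"

lemma coag_majorant_sums:
  assumes f: "f \<in> ell1 wt" and g: "g \<in> ell1 wt"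
  shows "coag_majorant f g sums (3/2 * wnorm wt f * wnorm wt g)"
proof -
  have sf: "summable (\<lambda>n. wt n * \<bar>f n\<bar>)" and sg: "summable (\<lambda>n. wt n * \<bar>g n\<bar>)"
    using f g by (simp_all add: ell1_def)
  have "(\<lambda>n. \<Sum>i\<le>n. wt i * \<bar>g i\<bar> * (wt (n - i) * \<bar>f (n - i)\<bar>)) sums (wnorm wt g * wnorm wt f)"
    unfolding wnorm_def using sf sg ell1_term_nonneg[OF wt_nonneg f] ell1_term_nonneg[OF wt_nonneg g]
    by (intro Cauchy_product_sums) auto
  then have "coag_majorant f g sums (1/2 * (wnorm wt g * wnorm wt f) + wnorm wt f * wnorm wt g)"
    unfolding coag_majorant_def
    by (intro sums_add sums_mult sums_mult2) (simp_all add: wnorm_def summable_sums sf)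
  then show ?thesis
    by (simp add: algebra_simps)
qed

lemma coag_majorant_nonneg:
  assumes "f \<in> ell1 wt" and "g \<in> ell1 wt"
  shows "0 \<le> coag_majorant f g n"
proof -
  note F = ell1_term_nonneg[OF wt_nonneg assms(1)] and G = ell1_term_nonneg[OF wt_nonneg assms(2)]
  have "0 \<le> (\<Sum>i\<le>n. wt i * \<bar>g i\<bar> * (wt (n - i) * \<bar>f (n - i)\<bar>))"
    by (rule sum_nonneg, rule mult_nonneg_nonneg[OF G F])
  then show ?thesis
    unfolding coag_majorant_def
    using mult_nonneg_nonneg[OF F wnorm_nonneg[OF wt_nonneg assms(2)]] by simp
qed

lemma weighted_coag_le_majorant:
  assumes q: "kernel_bounded C q" and f: "f \<in> ell1 wt" and g: "g \<in> ell1 wt"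
  shows "w n * \<bar>coag q f g n\<bar> \<le> C * coag_majorant f g n"
proof (cases "n = 0")
  case True
  then show ?thesis
    using kernel_bounded_nonneg[OF q] coag_majorant_nonneg[OF f g] by (simp add: coag_def)
next
  case False
  then have n: "1 \<le> n" by simp
  define F where "F = (\<lambda>i. wt i * \<bar>f i\<bar>)"
  define G where "G = (\<lambda>i. wt i * \<bar>g i\<bar>)"
  have C: "0 \<le> C" using kernel_bounded_nonneg[OF q] .
  have F: "0 \<le> F i" and G: "0 \<le> G i" for i
    unfolding F_def G_def using ell1_term_nonneg[OF wt_nonneg] f g by auto
  have gain: "w n * \<bar>\<Sum>j=1..n-1. q (n-j) j * f (n-j) * g j\<bar> \<le> C * (\<Sum>i\<le>n. G i * F (n - i))"
  proof -
    have "w n * \<bar>\<Sum>j=1..n-1. q (n-j) j * f (n-j) * g j\<bar> \<le>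
        (\<Sum>j=1..n-1. w n * \<bar>q (n-j) j * f (n-j) * g j\<bar>)"
      using w_pos[OF n] by (simp add: mult_left_mono flip: sum_distrib_left)
    also have "\<dots> \<le> (\<Sum>j=1..n-1. C * (G j * F (n - j)))"
      using kernel_bounded_term[OF q, of "n - _" _ n] n
      by (intro sum_mono) (auto simp: F_def G_def ac_simps)
    also have "\<dots> \<le> (\<Sum>i\<le>n. C * (G i * F (n - i)))"
      using C F G by (intro sum_mono2) auto
    finally show ?thesis
      by (simp add: sum_distrib_left)
  qed
  have loss: "w n * \<bar>\<Sum>j. q n (Suc j) * f n * g (Suc j)\<bar> \<le> C * F n * wnorm wt g"
  proof -
    have abs_summable: "summable (\<lambda>j. \<bar>q n (Suc j) * f n * g (Suc j)\<bar>)"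
      using coag_loss_abs_summable[OF q g n] .
    have G_summable: "summable (\<lambda>j. G (Suc j))"
      using g summable_Suc_iff[of G] by (simp add: ell1_def G_def)
    have "w n * \<bar>\<Sum>j. q n (Suc j) * f n * g (Suc j)\<bar> \<le> w n * (\<Sum>j. \<bar>q n (Suc j) * f n * g (Suc j)\<bar>)"
      using w_pos[OF n] abs_summable by (intro mult_left_mono summable_rabs) auto
    also have "\<dots> = (\<Sum>j. w n * \<bar>q n (Suc j) * f n * g (Suc j)\<bar>)"
      using abs_summable by (rule suminf_mult[symmetric])
    also have "\<dots> \<le> (\<Sum>j. C * F n * G (Suc j))"
      using kernel_bounded_term[OF q n, of "Suc _" n] n abs_summable G_summable
      by (intro suminf_le summable_mult) (auto simp: F_def G_def)
    also have "\<dots> = C * F n * (\<Sum>j. G (Suc j))"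
      using G_summable by (rule suminf_mult)
    also have "(\<Sum>j. G (Suc j)) = wnorm wt g"
      using g suminf_split_head[of G] summable_Suc_iff[of G] G_summable
      by (simp add: ell1_def G_def wnorm_def)
    finally show ?thesis .
  qed
  have "\<bar>coag q f g n\<bar> \<le>
      1/2 * \<bar>\<Sum>j=1..n-1. q (n-j) j * f (n-j) * g j\<bar> + \<bar>\<Sum>j. q n (Suc j) * f n * g (Suc j)\<bar>"
    using False abs_triangle_ineq4 by (simp add: coag_def abs_mult)
  then have "w n * \<bar>coag q f g n\<bar> \<le>
      w n * (1/2 * \<bar>\<Sum>j=1..n-1. q (n-j) j * f (n-j) * g j\<bar> + \<bar>\<Sum>j. q n (Suc j) * f n * g (Suc j)\<bar>)"
    by (rule mult_left_mono) (rule w_nonneg[OF n])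
  also have "\<dots> \<le> C * coag_majorant f g n"
    using gain loss by (simp add: coag_majorant_def F_def G_def algebra_simps)
  finally show ?thesis .
qed

lemma
  assumes q: "kernel_bounded C q" and f: "f \<in> ell1 wt" and g: "g \<in> ell1 wt"
  shows coag_in_ell1: "coag q f g \<in> ell1 w"
    and wnorm_coag_le: "wnorm w (coag q f g) \<le> 3/2 * C * wnorm wt f * wnorm wt g"
proof -
  have majorant: "(\<lambda>n. C * coag_majorant f g n) sums (C * (3/2 * wnorm wt f * wnorm wt g))"
    using coag_majorant_sums[OF f g] by (rule sums_mult)
  have le: "w n * \<bar>coag q f g n\<bar> \<le> C * coag_majorant f g n" for n
    using weighted_coag_le_majorant[OF q f g] .
  have nonneg: "0 \<le> w n * \<bar>coag q f g n\<bar>" for n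
    using w_nonneg[of n] by (cases "n = 0") (simp_all add: coag_def)
  have summable: "summable (\<lambda>n. w n * \<bar>coag q f g n\<bar>)"
    using le nonneg by (intro summable_comparison_test'[OF sums_summable[OF majorant]]) auto
  then show "coag q f g \<in> ell1 w"
    by (simp add: ell1_def coag_def)
  show "wnorm w (coag q f g) \<le> 3/2 * C * wnorm wt f * wnorm wt g"
    using sums_le[OF le summable_sums[OF summable] majorant] by (simp add: wnorm_def ac_simps)
qed

lemma coag_loss_summable:
  assumes "kernel_bounded C q" and "g \<in> ell1 wt" and "1 \<le> n"
  shows "summable (\<lambda>j. q n (Suc j) * f n * g (Suc j))"
  using coag_loss_abs_summable[OF assms] by (rule summable_rabs_cancel)

lemma coag_diff_kernel:
  assumes "kernel_bounded C p" and "kernel_bounded D q" and "g \<in> ell1 wt"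
  shows "coag (p - q) f g = coag p f g - coag q f g"
  using assms by (intro coag_eq_diff coag_loss_summable) (auto simp: algebra_simps)

lemma coag_square_diff:
  assumes q: "kernel_bounded C q" and f: "f \<in> ell1 wt" and g: "g \<in> ell1 wt"
  shows "coag q f f - coag q g g = coag q (f - g) f + coag q g (f - g)"
proof -
  have "coag q (f - g) f = coag q f f - coag q g f"
    using q f by (intro coag_eq_diff coag_loss_summable) (auto simp: algebra_simps)
  moreover have "coag q g (f - g) = coag q g f - coag q g g"
    using q f g by (intro coag_eq_diff coag_loss_summable) (auto simp: algebra_simps)
  ultimately show ?thesis
    by simp
qed

lemma wnorm_coag_square_diff_le:
  assumes q: "kernel_bounded C q" and f: "f \<in> ell1 wt" and g: "g \<in> ell1 wt"
  shows "wnorm w (coag q f f - coag q g g) \<le> 3/2 * C * (wnorm wt f + wnorm wt g) * wnorm wt (f - g)"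
proof -
  have fg: "f - g \<in> ell1 wt"
    using wt_nonneg f g by (rule ell1_diff)
  have "wnorm w (coag q f f - coag q g g) \<le> wnorm w (coag q (f - g) f) + wnorm w (coag q g (f - g))"
    unfolding coag_square_diff[OF q f g]
    using w_nonneg coag_in_ell1[OF q fg f] coag_in_ell1[OF q g fg] by (rule wnorm_add_le)
  also have "\<dots> \<le> 3/2 * C * wnorm wt (f - g) * wnorm wt f + 3/2 * C * wnorm wt g * wnorm wt (f - g)"
    using wnorm_coag_le[OF q fg f] wnorm_coag_le[OF q g fg] by (rule add_mono)
  finally show ?thesis
    by (simp add: algebra_simps)
qed

lemma coag_lipschitz_on_ball:
  assumes q: "kernel_bounded C q" and f: "f \<in> ell1 wt" and g: "g \<in> ell1 wt"
    and "wnorm wt f \<le> r" and "wnorm wt g \<le> r"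
  shows "wnorm w (coag q f f - coag q g g) \<le> 3 * C * r * wnorm wt (f - g)"
proof -
  have "wnorm w (coag q f f - coag q g g) \<le> 3/2 * C * (wnorm wt f + wnorm wt g) * wnorm wt (f - g)"
    using q f g by (rule wnorm_coag_square_diff_le)
  also have "\<dots> \<le> 3/2 * C * (r + r) * wnorm wt (f - g)"
    using assms kernel_bounded_nonneg[OF q] wnorm_nonneg[OF wt_nonneg ell1_diff[OF wt_nonneg f g]]
    by (intro mult_right_mono mult_left_mono add_mono) auto
  finally show ?thesis
    by (simp add: algebra_simps)
qed

lemma coag_tendsto_zero:
  assumes q: "eventually (\<lambda>x. kernel_bounded C (q x)) F"
    and lim: "\<And>n j. 1 \<le> n \<Longrightarrow> 1 \<le> j \<Longrightarrow> ((\<lambda>x. q x n j) \<longlongrightarrow> 0) F" and g: "g \<in> ell1 wt"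
  shows "((\<lambda>x. coag (q x) f g n) \<longlongrightarrow> 0) F"
proof (cases "n = 0")
  case False
  then have n: "1 \<le> n" by simp
  define M where "M j = C * (wt n * \<bar>f n\<bar>) * (wt (Suc j) * \<bar>g (Suc j)\<bar>) / w n" for j
  have "summable (\<lambda>j. wt (Suc j) * \<bar>g (Suc j)\<bar>)"
    using g summable_Suc_iff[of "\<lambda>n. wt n * \<bar>g n\<bar>"] by (simp add: ell1_def)
  then have M: "summable M"
    unfolding M_def by (intro summable_divide summable_mult)
  have "eventually (\<lambda>x. \<forall>j. \<bar>q x n (Suc j) * f n * g (Suc j)\<bar> \<le> M j) F"
    using q
  proof eventually_elim
    case (elim x)
    show ?case
    proof
      fix j
      have "w n * \<bar>q x n (Suc j) * f n * g (Suc j)\<bar> \<le> C * (wt n * \<bar>f n\<bar>) * (wt (Suc j) * \<bar>g (Suc j)\<bar>)"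
        using elim n by (intro kernel_bounded_term) auto
      then show "\<bar>q x n (Suc j) * f n * g (Suc j)\<bar> \<le> M j"
        using w_pos[OF n] by (simp add: M_def pos_le_divide_eq mult.commute)
    qed
  qed
  then have "((\<lambda>x. \<Sum>j. q x n (Suc j) * f n * g (Suc j)) \<longlongrightarrow> (\<Sum>j. 0 * f n * g (Suc j))) F"
    using M n by (intro tendsto_suminf_dominated tendsto_mult_right lim) auto
  moreover have "((\<lambda>x. \<Sum>j=1..n-1. q x (n-j) j * f (n-j) * g j) \<longlongrightarrow> (\<Sum>j=1..n-1. 0 * f (n-j) * g j)) F"
    by (intro tendsto_sum tendsto_mult_right lim) auto
  ultimately have "((\<lambda>x. 1/2 * (\<Sum>j=1..n-1. q x (n-j) j * f (n-j) * g j) - (\<Sum>j. q x n (Suc j) * f n * g (Suc j)))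
      \<longlongrightarrow> 1/2 * 0 - 0) F"
    by (intro tendsto_diff tendsto_mult_left) simp_all
  then show ?thesis
    using False by (simp add: coag_def)
qed (simp add: coag_def)

lemma wnorm_coag_tendsto_zero:
  assumes q: "eventually (\<lambda>x. kernel_bounded C (q x)) F"
    and lim: "\<And>n j. 1 \<le> n \<Longrightarrow> 1 \<le> j \<Longrightarrow> ((\<lambda>x. q x n j) \<longlongrightarrow> 0) F" and f: "f \<in> ell1 wt" and g: "g \<in> ell1 wt"
  shows "((\<lambda>x. wnorm w (coag (q x) f g)) \<longlongrightarrow> 0) F"
proof -
  have "((\<lambda>x. w n * \<bar>coag (q x) f g n\<bar>) \<longlongrightarrow> w n * \<bar>0\<bar>) F" for n
    using coag_tendsto_zero[OF q lim g] by (intro tendsto_mult_left tendsto_rabs)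
  moreover have "eventually (\<lambda>x. \<forall>n. \<bar>w n * \<bar>coag (q x) f g n\<bar>\<bar> \<le> C * coag_majorant f g n) F"
    using q
  proof eventually_elim
    case (elim x)
    show ?case
    proof
      fix n
      show "\<bar>w n * \<bar>coag (q x) f g n\<bar>\<bar> \<le> C * coag_majorant f g n"
        using weighted_coag_le_majorant[OF elim f g, of n] w_nonneg[of n]
        by (cases "n = 0") (simp_all add: coag_def)
    qed
  qed
  moreover have "summable (\<lambda>n. C * coag_majorant f g n)"
    using coag_majorant_sums[OF f g] by (intro summable_mult sums_summable)
  ultimately have "((\<lambda>x. \<Sum>n. w n * \<bar>coag (q x) f g n\<bar>) \<longlongrightarrow> (\<Sum>n. w n * \<bar>0\<bar>)) F"
    by (rule tendsto_suminf_dominated)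
  then show ?thesis
    by (simp add: wnorm_def)
qed

lemma coag_continuous:
  fixes q :: "'a::metric_space \<Rightarrow> nat \<Rightarrow> nat \<Rightarrow> real"
  assumes t: "t \<in> S" and f: "f \<in> ell1 wt" and \<epsilon>: "0 < \<epsilon>"
    and d: "0 < d" and bounded: "\<And>s. s \<in> S \<Longrightarrow> dist s t < d \<Longrightarrow> kernel_bounded C (q s)"
    and cont: "\<And>n j. 1 \<le> n \<Longrightarrow> 1 \<le> j \<Longrightarrow> continuous_on S (\<lambda>s. q s n j)"
  shows "\<exists>\<delta>>0. \<forall>s\<in>S. \<forall>g\<in>ell1 wt. dist s t < \<delta> \<longrightarrow> wnorm wt (g - f) < \<delta> \<longrightarrow>
           wnorm w (coag (q s) g g - coag (q t) f f) < \<epsilon>"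
proof -
  have qt: "kernel_bounded C (q t)"
    using bounded[OF t] d by simp
  have near: "eventually (\<lambda>s. kernel_bounded (C + C) (q s - q t)) (at t within S)"
    unfolding eventually_at using d bounded qt by (blast intro: kernel_bounded_diff)
  have "((\<lambda>s. q s n j - q t n j) \<longlongrightarrow> 0) (at t within S)" if "1 \<le> n" "1 \<le> j" for n j
    using cont[OF that] t unfolding continuous_on_def by (intro LIM_zero) auto
  then have "((\<lambda>s. wnorm w (coag (q s - q t) f f)) \<longlongrightarrow> 0) (at t within S)"
    by (intro wnorm_coag_tendsto_zero[OF near _ f f]) simp
  then have "eventually (\<lambda>s. wnorm w (coag (q s - q t) f f) < \<epsilon>/2) (at t within S)"
    by (rule order_tendstoD(2)) (use \<epsilon> in linarith)
  then obtain \<delta>\<^sub>1 where \<delta>\<^sub>1: "0 < \<delta>\<^sub>1"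
    and kernel_close: "\<And>s. s \<in> S \<Longrightarrow> s \<noteq> t \<Longrightarrow> dist s t < \<delta>\<^sub>1 \<Longrightarrow> wnorm w (coag (q s - q t) f f) < \<epsilon>/2"
    unfolding eventually_at by blast
  define R where "R = wnorm wt f"
  define L where "L = 3/2 * C * (2 * R + 1)"
  have L: "0 \<le> L"
    using kernel_bounded_nonneg[OF qt] wnorm_nonneg[OF wt_nonneg f] by (simp add: L_def R_def)
  define \<delta> where "\<delta> = min (min d \<delta>\<^sub>1) (min 1 (\<epsilon> / (2 * (L + 1))))"
  have "0 < \<delta>"
    using d \<delta>\<^sub>1 \<epsilon> L by (simp add: \<delta>_def)
  moreover have "wnorm w (coag (q s) g g - coag (q t) f f) < \<epsilon>"
    if s: "s \<in> S" "dist s t < \<delta>" and g: "g \<in> ell1 wt" and gf: "wnorm wt (g - f) < \<delta>" for s g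
  proof -
    have qs: "kernel_bounded C (q s)"
      using s bounded by (simp add: \<delta>_def)
    have gf_ell1: "g - f \<in> ell1 wt"
      using wt_nonneg g f by (rule ell1_diff)
    have "wnorm wt g \<le> R + wnorm wt (g - f)"
      using wnorm_add_le[OF wt_nonneg f gf_ell1] by (simp add: R_def)
    then have g_small: "wnorm wt g + R \<le> 2 * R + 1"
      using gf by (simp add: \<delta>_def)
    have "wnorm w (coag (q s) g g - coag (q s) f f) \<le> 3/2 * C * (wnorm wt g + R) * wnorm wt (g - f)"
      using wnorm_coag_square_diff_le[OF qs g f] by (simp add: R_def)
    also have "\<dots> \<le> L * wnorm wt (g - f)"
      unfolding L_def using g_small kernel_bounded_nonneg[OF qs] wnorm_nonneg[OF wt_nonneg gf_ell1]
      by (intro mult_right_mono mult_left_mono) auto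
    also have "\<dots> \<le> (L + 1) * (\<epsilon> / (2 * (L + 1)))"
      using gf L wnorm_nonneg[OF wt_nonneg gf_ell1] by (intro mult_mono) (simp_all add: \<delta>_def)
    also have "\<dots> = \<epsilon>/2"
      using L by (simp add: field_simps)
    finally have square_part: "wnorm w (coag (q s) g g - coag (q s) f f) \<le> \<epsilon>/2" .
    have kernel_part: "wnorm w (coag (q s - q t) f f) < \<epsilon>/2"
      using kernel_close[OF s(1)] s(2) \<epsilon> by (cases "s = t") (simp_all add: \<delta>_def)
    have split: "coag (q s) g g - coag (q t) f f = (coag (q s) g g - coag (q s) f f) + coag (q s - q t) f f"
      by (simp add: coag_diff_kernel[OF qs qt f])
    have "wnorm w (coag (q s) g g - coag (q t) f f) \<le> wnorm w (coag (q s) g g - coag (q s) f f) + wnorm w (coag (q s - q t) f f)"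
      unfolding split
    proof (rule wnorm_add_le[OF w_nonneg])
      show "coag (q s) g g - coag (q s) f f \<in> ell1 w"
        using w_nonneg coag_in_ell1[OF qs g g] coag_in_ell1[OF qs f f] by (rule ell1_diff)
      show "coag (q s - q t) f f \<in> ell1 w"
        using kernel_bounded_diff[OF qs qt] f f by (rule coag_in_ell1)
    qed
    then show ?thesis
      using square_part kernel_part by linarith
  qed
  ultimately show ?thesis
    by blast
qed

end

locale coag_kernel = coag_weights +
  fixes T :: ereal and k :: "nat \<Rightarrow> nat \<Rightarrow> real \<Rightarrow> real"
  assumes k_nonneg: "\<And>n j t. 1 \<le> n \<Longrightarrow> 1 \<le> j \<Longrightarrow> 0 \<le> t \<Longrightarrow> ereal t < T \<Longrightarrow> 0 \<le> k n j t"
    and k_cont: "\<And>n j. 1 \<le> n \<Longrightarrow> 1 \<le> j \<Longrightarrow> continuous_on {t. 0 \<le> t \<and> ereal t < T} (k n j)"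
    and k_bound: "\<And>t'. 0 < t' \<Longrightarrow> ereal t' < T \<Longrightarrow>
        \<exists>c>0. \<forall>n j t. 1 \<le> n \<longrightarrow> 1 \<le> j \<longrightarrow> 0 \<le> t \<longrightarrow> t \<le> t' \<longrightarrow> k n j t \<le> c * wt n * wt j / w (n + j)"
begin

lemma kernel_bounded_beyond:
  assumes "0 \<le> t" and "ereal t < T"
  obtains t\<^sub>1 c where "t < t\<^sub>1" "ereal t\<^sub>1 < T"
    and "\<And>s. 0 \<le> s \<Longrightarrow> s \<le> t\<^sub>1 \<Longrightarrow> kernel_bounded c (\<lambda>n j. k n j s)"
proof -
  obtain t\<^sub>1 where "ereal t < ereal t\<^sub>1" and t\<^sub>1: "ereal t\<^sub>1 < T"
    using ereal_dense2[OF assms(2)] by blast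
  then have "t < t\<^sub>1"
    by simp
  then obtain c where c: "\<And>n j s. 1 \<le> n \<Longrightarrow> 1 \<le> j \<Longrightarrow> 0 \<le> s \<Longrightarrow> s \<le> t\<^sub>1 \<Longrightarrow>
      k n j s \<le> c * wt n * wt j / w (n + j)"
    using k_bound[of t\<^sub>1] assms(1) t\<^sub>1 by auto
  have "kernel_bounded c (\<lambda>n j. k n j s)" if "0 \<le> s" "s \<le> t\<^sub>1" for s
    unfolding kernel_bounded_def
  proof (intro allI impI)
    fix n j :: nat
    assume "1 \<le> n" "1 \<le> j"
    moreover have "ereal s < T"
      using that(2) by (intro le_less_trans[OF _ t\<^sub>1]) simp
    ultimately show "\<bar>k n j s\<bar> \<le> c * wt n * wt j / w (n + j)"
      using c k_nonneg that by simp
  qed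
  with \<open>t < t\<^sub>1\<close> t\<^sub>1 show ?thesis
    using that by blast
qed

lemma Kop_in_ell1:
  assumes "0 \<le> t" and "ereal t < T" and "f \<in> ell1 wt"
  shows "Kop k t f \<in> ell1 w"
proof -
  obtain t\<^sub>1 c where "t < t\<^sub>1" and bounded: "\<And>s. 0 \<le> s \<Longrightarrow> s \<le> t\<^sub>1 \<Longrightarrow> kernel_bounded c (\<lambda>n j. k n j s)"
    using kernel_bounded_beyond[OF assms(1,2)] by blast
  have "kernel_bounded c (\<lambda>n j. k n j t)"
    using assms(1) \<open>t < t\<^sub>1\<close> by (intro bounded) simp_all
  then show ?thesis
    unfolding Kop_eq_coag by (rule coag_in_ell1[OF _ assms(3,3)])
qed

lemma Kop_continuous:
  assumes "0 \<le> t" and "ereal t < T" and "f \<in> ell1 wt" and "0 < \<epsilon>"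
  shows "\<exists>\<delta>>0. \<forall>s g. 0 \<le> s \<longrightarrow> ereal s < T \<longrightarrow> g \<in> ell1 wt \<longrightarrow> \<bar>s - t\<bar> < \<delta> \<longrightarrow>
           wnorm wt (g - f) < \<delta> \<longrightarrow> wnorm w (Kop k s g - Kop k t f) < \<epsilon>"
proof -
  obtain t\<^sub>1 c where "t < t\<^sub>1" and bounded: "\<And>s. 0 \<le> s \<Longrightarrow> s \<le> t\<^sub>1 \<Longrightarrow> kernel_bounded c (\<lambda>n j. k n j s)"
    using kernel_bounded_beyond[OF assms(1,2)] by blast
  define S where "S = {t. 0 \<le> t \<and> ereal t < T}"
  have t: "t \<in> S" and d: "0 < t\<^sub>1 - t"
    using assms \<open>t < t\<^sub>1\<close> by (simp_all add: S_def)
  have near: "kernel_bounded c (\<lambda>n j. k n j s)" if "s \<in> S" "dist s t < t\<^sub>1 - t" for s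
    using that by (intro bounded) (auto simp: S_def dist_real_def)
  have cont: "continuous_on S (\<lambda>s. k n j s)" if "1 \<le> n" "1 \<le> j" for n j
    using k_cont[OF that] by (simp add: S_def)
  have "\<exists>\<delta>>0. \<forall>s\<in>S. \<forall>g\<in>ell1 wt. dist s t < \<delta> \<longrightarrow> wnorm wt (g - f) < \<delta> \<longrightarrow>
      wnorm w (coag (\<lambda>n j. k n j s) g g - coag (\<lambda>n j. k n j t) f f) < \<epsilon>"
    by (rule coag_continuous[OF t assms(3,4) d near cont])
  then show ?thesis
    by (simp add: Kop_eq_coag S_def dist_real_def) blast
qed

lemma Kop_lipschitz:
  assumes "0 \<le> t'" and "ereal t' < T"
  shows "\<exists>L. \<forall>t f g. 0 \<le> t \<longrightarrow> t \<le> t' \<longrightarrow> f \<in> ell1 wt \<longrightarrow> g \<in> ell1 wt \<longrightarrow>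
           wnorm wt f \<le> r \<longrightarrow> wnorm wt g \<le> r \<longrightarrow>
           wnorm w (Kop k t f - Kop k t g) \<le> L * wnorm wt (f - g)"
proof -
  obtain t\<^sub>1 c where "t' < t\<^sub>1" and bounded: "\<And>s. 0 \<le> s \<Longrightarrow> s \<le> t\<^sub>1 \<Longrightarrow> kernel_bounded c (\<lambda>n j. k n j s)"
    using kernel_bounded_beyond[OF assms] by blast
  have "wnorm w (Kop k t f - Kop k t g) \<le> 3 * c * r * wnorm wt (f - g)"
    if "0 \<le> t" "t \<le> t'" "f \<in> ell1 wt" "g \<in> ell1 wt" "wnorm wt f \<le> r" "wnorm wt g \<le> r" for t f g
    unfolding Kop_eq_coag using that \<open>t' < t\<^sub>1\<close> by (intro coag_lipschitz_on_ball[OF bounded]) auto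
  then show ?thesis
    by (intro exI[of _ "3 * c * r"]) simp
qed

end

theorem proposition4p3:
  fixes T :: ereal and a :: "nat \<Rightarrow> real" and b :: "nat \<Rightarrow> nat \<Rightarrow> real"
    and k :: "nat \<Rightarrow> nat \<Rightarrow> real \<Rightarrow> real"
    and w :: "nat \<Rightarrow> real" and \<kappa> \<alpha> :: real
  defines "wt \<equiv> (\<lambda>n. (1 + a n) powr \<alpha> * w n)"
  assumes T_pos: "0 < T"
    and a_nonneg: "\<And>n. 1 \<le> n \<Longrightarrow> 0 \<le> a n"
    and b_nonneg: "\<And>n j. 1 \<le> n \<Longrightarrow> 1 \<le> j \<Longrightarrow> 0 \<le> b n j"
    and b_zero: "\<And>n j. 1 \<le> n \<Longrightarrow> 1 \<le> j \<Longrightarrow> j \<le> n \<Longrightarrow> b n j = 0"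
    and k_nonneg: "\<And>n j t. 1 \<le> n \<Longrightarrow> 1 \<le> j \<Longrightarrow> 0 \<le> t \<Longrightarrow> ereal t < T \<Longrightarrow> 0 \<le> k n j t"
    and k_sym: "\<And>n j t. 1 \<le> n \<Longrightarrow> 1 \<le> j \<Longrightarrow> 0 \<le> t \<Longrightarrow> ereal t < T \<Longrightarrow> k n j t = k j n t"
    and k_cont: "\<And>n j. 1 \<le> n \<Longrightarrow> 1 \<le> j \<Longrightarrow> continuous_on {t. 0 \<le> t \<and> ereal t < T} (k n j)"
    and w_ge: "\<And>n. 1 \<le> n \<Longrightarrow> real n \<le> w n"
    and w_mono: "\<And>m n. 1 \<le> m \<Longrightarrow> m \<le> n \<Longrightarrow> w m \<le> w n"
    and kappa: "0 < \<kappa>" "\<kappa> \<le> 1"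
    and w_b: "\<And>j. 2 \<le> j \<Longrightarrow> (\<Sum>n=1..j-1. w n * b n j) \<le> \<kappa> * w j"
    and alpha: "0 \<le> \<alpha>" "\<alpha> < 1"
    and cases: "\<alpha> = 0 \<or> (\<kappa> < 1 \<and> 0 < \<alpha> \<and> \<alpha> < 1)"
    and k_bound: "\<And>t'. 0 < t' \<Longrightarrow> ereal t' < T \<Longrightarrow>
        \<exists>c>0. \<forall>n j t. 1 \<le> n \<longrightarrow> 1 \<le> j \<longrightarrow> 0 \<le> t \<longrightarrow> t \<le> t' \<longrightarrow>
          k n j t \<le> c * wt n * wt j / w (n + j)"
  shows "(\<forall>t f. 0 \<le> t \<longrightarrow> ereal t < T \<longrightarrow> f \<in> ell1 wt \<longrightarrow> Kop k t f \<in> ell1 w)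
    \<and> (\<forall>t f. 0 \<le> t \<longrightarrow> ereal t < T \<longrightarrow> f \<in> ell1 wt \<longrightarrow>
         (\<forall>\<epsilon>>0. \<exists>\<delta>>0. \<forall>s g. 0 \<le> s \<longrightarrow> ereal s < T \<longrightarrow> g \<in> ell1 wt \<longrightarrow>
             \<bar>s - t\<bar> < \<delta> \<longrightarrow> wnorm wt (\<lambda>n. g n - f n) < \<delta> \<longrightarrow>
             wnorm w (\<lambda>n. Kop k s g n - Kop k t f n) < \<epsilon>))
    \<and> (\<forall>t' r. 0 \<le> t' \<longrightarrow> ereal t' < T \<longrightarrow> 0 < r \<longrightarrow>
         (\<exists>L. \<forall>t f g. 0 \<le> t \<longrightarrow> t \<le> t' \<longrightarrow> f \<in> ell1 wt \<longrightarrow> g \<in> ell1 wt \<longrightarrow>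
             wnorm wt f \<le> r \<longrightarrow> wnorm wt g \<le> r \<longrightarrow>
             wnorm w (\<lambda>n. Kop k t f n - Kop k t g n) \<le> L * wnorm wt (\<lambda>n. f n - g n)))"
proof -
  (* Only positivity and monotonicity of the weights and the hypotheses on k enter. *)
  interpret coag_kernel w wt T k
  proof
    show w_pos: "0 < w n" if "1 \<le> n" for n
      using w_ge[OF that] that by linarith
    show "0 < wt n" if "1 \<le> n" for n
      using w_pos[OF that] a_nonneg[OF that] by (simp add: wt_def)
  qed (fact w_mono k_nonneg k_cont k_bound)+
  show ?thesis
    using Kop_in_ell1 Kop_continuous Kop_lipschitz by (simp add: fun_diff_def)
qed

end
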